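(* Every Collatz trajectory $(n,C(n),C^2(n),\dots)$, $n\in\mathbb{N}^+$, that does not contain $1$ contains some element $m\equiv 6\pmod 8$.
   Context: $C:\mathbb{N}^+\to\mathbb{N}^+$ is the Collatz function $C(n)=n/2$ for $n$ even and $C(n)=3n+1$ for $n$ odd. *)

theory Defs
  imports Main
begin

definition collatz :: "nat \<Rightarrow> nat" where
  "collatz n = (if even n then n div 2 else 3 * n + 1)"

end

theory Submission
  imports Defs
begin

text \<open>Every positive number not congruent to 3 mod 4 has 1 or an element congruent to
  6 mod 8 in its trajectory, by strong induction: an even
  number not congruent to 6 mod 8 halves to a smaller number not congruent to 3 mod 4, and
  for x congruent to 1 mod 4 two steps give 2w with w = (3x+1)/4 < x; either 2w is
  congruent to 6 mod 8, or w is again not congruent to 3 mod 4. A number congruent to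
  3 mod 4 is mapped to an even number in one step.\<close>

definition reaches_one_or_six_mod_8 :: "nat \<Rightarrow> bool" where
  "reaches_one_or_six_mod_8 x \<longleftrightarrow> (\<exists>k. (collatz ^^ k) x = 1 \<or> (collatz ^^ k) x mod 8 = 6)"

lemma reaches_one_or_six_mod_8_funpow:
  assumes "reaches_one_or_six_mod_8 ((collatz ^^ j) x)"
  shows "reaches_one_or_six_mod_8 x"
proof -
  obtain k where "(collatz ^^ k) ((collatz ^^ j) x) = 1 \<or> (collatz ^^ k) ((collatz ^^ j) x) mod 8 = 6"
    using assms unfolding reaches_one_or_six_mod_8_def by blast
  then show ?thesis
    unfolding reaches_one_or_six_mod_8_def by (metis funpow_add o_apply)
qed

lemma reaches_one_or_six_mod_8_self:
  "x = 1 \<or> x mod 8 = 6 \<Longrightarrow> reaches_one_or_six_mod_8 x"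
  unfolding reaches_one_or_six_mod_8_def by (metis funpow_0)

lemma collatz_even: "even x \<Longrightarrow> collatz x = x div 2"
  by (simp add: collatz_def)

lemma collatz_odd: "odd x \<Longrightarrow> collatz x = 3 * x + 1"
  by (simp add: collatz_def)

lemma collatz_twice_mod_4_eq_1:
  assumes "x mod 4 = 1"
  shows "(collatz ^^ 2) x = 2 * ((3 * x + 1) div 4)"
proof -
  have "odd x" and "even (3 * x + 1)" and "(3 * x + 1) div 2 = 2 * ((3 * x + 1) div 4)"
    using assms by presburger+
  then show ?thesis
    by (simp add: numeral_2_eq_2 collatz_odd collatz_even)
qed

lemma reaches_one_or_six_mod_8_if_not_3_mod_4:
  "0 < x \<Longrightarrow> x mod 4 \<noteq> 3 \<Longrightarrow> reaches_one_or_six_mod_8 x"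
proof (induction x rule: less_induct)
  case (less x)
  consider "x = 1" | "x mod 8 = 6" | "even x" "x mod 8 \<noteq> 6" | "x \<noteq> 1" "x mod 4 = 1"
  proof -
    have "x = 1 \<or> x mod 8 = 6 \<or> (even x \<and> x mod 8 \<noteq> 6) \<or> (x \<noteq> 1 \<and> x mod 4 = 1)"
      using less.prems(2) by presburger
    then show thesis using that by blast
  qed
  then show ?case
  proof cases
    case 3
    then have "reaches_one_or_six_mod_8 (x div 2)"
      using less by (intro less.IH) presburger+
    then show ?thesis
      using reaches_one_or_six_mod_8_funpow[of 1 x] 3 by (simp add: collatz_even)
  next
    case 4
    define w where "w = (3 * x + 1) div 4"
    have twice: "(collatz ^^ 2) x = 2 * w"
      using 4 collatz_twice_mod_4_eq_1 w_def by simp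
    show ?thesis
    proof (cases "w mod 4 = 3")
      case True
      then have "(2 * w) mod 8 = 6" by presburger
      then have "reaches_one_or_six_mod_8 ((collatz ^^ 2) x)"
        by (simp add: twice reaches_one_or_six_mod_8_self)
      then show ?thesis by (rule reaches_one_or_six_mod_8_funpow)
    next
      case False
      have "w < x" "0 < w" using 4 less.prems unfolding w_def by presburger+
      with False have "reaches_one_or_six_mod_8 w" by (intro less.IH)
      moreover have "(collatz ^^ 3) x = collatz ((collatz ^^ 2) x)"
        by (simp add: numeral_3_eq_3 numeral_2_eq_2)
      ultimately show ?thesis
        using reaches_one_or_six_mod_8_funpow[of 3 x] by (simp add: twice collatz_even)
    qed
  qed (use reaches_one_or_six_mod_8_self in blast)+
qed

theorem mainTheorem14:
  fixes n :: nat
  assumes "n > 0"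
    and "\<forall>k. (collatz ^^ k) n \<noteq> 1"
  shows "\<exists>k. (collatz ^^ k) n mod 8 = 6"
proof -
  have "reaches_one_or_six_mod_8 n"
  proof (cases "n mod 4 = 3")
    case True
    then have "odd n" and "(3 * n + 1) mod 4 \<noteq> 3" by presburger+
    then have "(collatz ^^ 1) n = 3 * n + 1" and "(3 * n + 1) mod 4 \<noteq> 3"
      by (simp_all add: collatz_odd)
    then show ?thesis
      using reaches_one_or_six_mod_8_if_not_3_mod_4 reaches_one_or_six_mod_8_funpow
      by (metis add_gr_0 zero_less_one)
  qed (use assms(1) reaches_one_or_six_mod_8_if_not_3_mod_4 in blast)
  then show ?thesis
    using assms(2) unfolding reaches_one_or_six_mod_8_def by blast
qed

end
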